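(* Let $\mathbb{F}$ be an infinite field with $\operatorname{char}(\mathbb{F})\neq 2$, let $G$ be a group with a group involution $\ast$, extended $\mathbb{F}$-linearly to $\mathbb{F}G$. Suppose that $\mathbb{F}G$ is normal with respect to $\ast$. Then $G^+\subseteq\zeta(G)$. In particular, $gg^\ast=g^\ast g\in\zeta(G)$ for all $g\in G$.
   Context: A group involution on $G$ is a map $\ast:G\to G$ with $(gh)^\ast=h^\ast g^\ast$ and $(g^\ast)^\ast=g$ for all $g,h\in G$; it is extended $\mathbb{F}$-linearly to an algebra involution of $\mathbb{F}G$. The algebra $\mathbb{F}G$ is normal (with respect to $\ast$) if $\alpha\alpha^\ast=\alpha^\ast\alpha$ for all $\alpha\in\mathbb{F}G$. $G^+=\{g\in G: g^\ast=g\}$, and $\zeta(G)$ is the center of $G$. *)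

theory Defs
  imports "HOL-Algebra.Group"
begin

definition group_center :: "('a, 'b) monoid_scheme \<Rightarrow> 'a set" where
  "group_center G = {z \<in> carrier G. \<forall>g \<in> carrier G. z \<otimes>\<^bsub>G\<^esub> g = g \<otimes>\<^bsub>G\<^esub> z}"

definition group_involution :: "('a, 'b) monoid_scheme \<Rightarrow> ('a \<Rightarrow> 'a) \<Rightarrow> bool" where
  "group_involution G s \<longleftrightarrow>
     (\<forall>g \<in> carrier G. s g \<in> carrier G) \<and>
     (\<forall>g \<in> carrier G. s (s g) = g) \<and>
     (\<forall>g \<in> carrier G. \<forall>h \<in> carrier G. s (g \<otimes>\<^bsub>G\<^esub> h) = s h \<otimes>\<^bsub>G\<^esub> s g)"

text \<open>Elements of the group algebra FG: finitely supported coefficient functions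
  on the carrier of G.\<close>
definition group_algebra :: "('a, 'b) monoid_scheme \<Rightarrow> ('a \<Rightarrow> 'f::field) set" where
  "group_algebra G = {\<alpha>. finite {x. \<alpha> x \<noteq> 0} \<and> (\<forall>x. x \<notin> carrier G \<longrightarrow> \<alpha> x = 0)}"

definition ga_mult :: "('a, 'b) monoid_scheme \<Rightarrow> ('a \<Rightarrow> 'f::field) \<Rightarrow> ('a \<Rightarrow> 'f) \<Rightarrow> ('a \<Rightarrow> 'f)" where
  "ga_mult G \<alpha> \<beta> = (\<lambda>x. if x \<in> carrier G
      then (\<Sum>y \<in> {y \<in> carrier G. \<alpha> y \<noteq> 0}. \<alpha> y * \<beta> (inv\<^bsub>G\<^esub> y \<otimes>\<^bsub>G\<^esub> x))
      else 0)"

text \<open>Linear extension of the involution: (\<Sum> a_g g)^* = \<Sum> a_g g^*, so the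
  coefficient of h in \<alpha>^* is \<alpha>(h^*).\<close>
definition ga_star :: "('a, 'b) monoid_scheme \<Rightarrow> ('a \<Rightarrow> 'a) \<Rightarrow> ('a \<Rightarrow> 'f::field) \<Rightarrow> ('a \<Rightarrow> 'f)" where
  "ga_star G s \<alpha> = (\<lambda>h. if h \<in> carrier G then \<alpha> (s h) else 0)"

definition ga_normal :: "('a, 'b) monoid_scheme \<Rightarrow> ('a \<Rightarrow> 'a) \<Rightarrow> 'f::field itself \<Rightarrow> bool" where
  "ga_normal G s TYPE('f) \<longleftrightarrow>
     (\<forall>\<alpha> \<in> (group_algebra G :: ('a \<Rightarrow> 'f) set).
        ga_mult G \<alpha> (ga_star G s \<alpha>) = ga_mult G (ga_star G s \<alpha>) \<alpha>)"

end

theory Submission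
  imports Defs "HOL-Library.Indicator_Function"
begin

text \<open>Test normality on the indicator \<alpha> of a set A with at most two elements. The coefficient
  of a s(b) in \<alpha> \<alpha>* counts its factorisations a' s(b') with a', b' in A, which is 1 or 2 and hence
  nonzero as char F is not 2; so the same coefficient of \<alpha>* \<alpha> is nonzero, i.e. a s(b) also
  factors as s(c) d with c, d in A. For A = {h} this gives h s(h) = s(h) h. For A = {g, h} with
  s(g) = g and s(h) \<noteq> h, going through the four possible factorisations of h g shows that g and h
  commute. A fixed element g then commutes with every h: either s(h) \<noteq> h, or s(h) = h and one
  applies the same fact to g h, which is not fixed unless g and h commute anyway.\<close>

lemma group_involutionD:
  fixes G (structure)
  assumes "group_involution G s" and "g \<in> carrier G"
  shows "s g \<in> carrier G" and "s (s g) = g"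
    and "\<And>h. h \<in> carrier G \<Longrightarrow> s (g \<otimes> h) = s h \<otimes> s g"
  using assms unfolding group_involution_def by auto

lemma indicator_in_group_algebra:
  fixes G (structure)
  assumes "finite A" and "A \<subseteq> carrier G"
  shows "(indicator A :: 'a \<Rightarrow> 'f::field) \<in> group_algebra G"
  using assms unfolding group_algebra_def indicator_def
  by (auto intro: finite_subset[of _ A])

lemma ga_star_indicator:
  fixes G (structure)
  assumes "group_involution G s" and "A \<subseteq> carrier G"
  shows "ga_star G s (indicator A :: 'a \<Rightarrow> 'f::field) = indicator (s ` A)"
proof
  fix h
  show "ga_star G s (indicator A) h = (indicator (s ` A) h :: 'f)"
  proof (cases "h \<in> carrier G")
    case True
    then have "s h \<in> A \<longleftrightarrow> h \<in> s ` A"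
      using assms by (force dest: group_involutionD)
    with True show ?thesis by (simp add: ga_star_def indicator_def)
  next
    case False
    then have "h \<notin> s ` A"
      using assms by (auto dest: group_involutionD)
    with False show ?thesis by (simp add: ga_star_def)
  qed
qed

lemma ga_mult_indicator:
  fixes G (structure)
  assumes "finite A" and "A \<subseteq> carrier G" and "x \<in> carrier G"
  shows "ga_mult G (indicator A) (indicator B) x
       = (of_nat (card {a \<in> A. inv a \<otimes> x \<in> B}) :: 'f::field)"
proof -
  have "{y \<in> carrier G. (indicator A y :: 'f) \<noteq> 0} = A"
    using assms(2) by (auto simp: indicator_def)
  then have "ga_mult G (indicator A) (indicator B) x = (\<Sum>a\<in>A. indicator B (inv a \<otimes> x) :: 'f)"
    using assms(3) by (simp add: ga_mult_def)
  also have "\<dots> = of_nat (card {a \<in> A. inv a \<otimes> x \<in> B})"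
    using assms(1) by (simp add: indicator_def Int_def conj_commute)
  finally show ?thesis .
qed

lemma ga_normal_factorisation:
  fixes G (structure)
  assumes "group G" and "group_involution G s" and "ga_normal G s TYPE('f::field)"
    and "(2::'f) \<noteq> 0"
    and "finite A" and "A \<subseteq> carrier G" and "card A \<le> 2" and "a \<in> A" and "b \<in> A"
  shows "\<exists>c\<in>A. \<exists>d\<in>A. a \<otimes> s b = s c \<otimes> d"
proof -
  interpret group G by fact
  have fin_s: "finite (s ` A)" and sA: "s ` A \<subseteq> carrier G"
    using assms(2,5,6) by (auto dest: group_involutionD)
  have ab: "a \<in> carrier G" "s b \<in> carrier G"
    using assms(2,6,8,9) by (auto dest: group_involutionD)
  define x where "x = a \<otimes> s b"
  have x: "x \<in> carrier G"
    using ab by (simp add: x_def)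
  let ?\<alpha> = "indicator A :: 'a \<Rightarrow> 'f"
  have normal: "ga_mult G ?\<alpha> (indicator (s ` A)) = ga_mult G (indicator (s ` A)) ?\<alpha>"
    using assms(3) indicator_in_group_algebra[OF assms(5,6)]
      ga_star_indicator[OF assms(2,6)] unfolding ga_normal_def by metis
  define L where "L = {a' \<in> A. inv a' \<otimes> x \<in> s ` A}"
  have "a \<in> L"
    using ab assms(8,9) by (simp add: L_def x_def m_assoc[symmetric])
  moreover have "card L \<le> 2"
    using assms(5,7) card_mono[of A L] by (auto simp: L_def)
  ultimately have "card L = 1 \<or> card L = 2"
    using assms(5) card_0_eq[of L] by (fastforce simp: L_def)
  then have "(of_nat (card L) :: 'f) \<noteq> 0"
    using assms(4) by auto
  then have "(of_nat (card {c' \<in> s ` A. inv c' \<otimes> x \<in> A}) :: 'f) \<noteq> 0"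
    using normal ga_mult_indicator[OF assms(5,6) x, of "s ` A"]
      ga_mult_indicator[OF fin_s sA x, of A] unfolding L_def by metis
  then have "{c' \<in> s ` A. inv c' \<otimes> x \<in> A} \<noteq> {}"
    by (metis card.empty of_nat_0)
  then obtain c where c: "c \<in> A" and d: "inv (s c) \<otimes> x \<in> A"
    by blast
  have "s c \<in> carrier G"
    using c assms(2,6) by (auto dest: group_involutionD)
  then have "x = s c \<otimes> (inv (s c) \<otimes> x)"
    using x by (simp add: m_assoc[symmetric])
  then show ?thesis
    using c d by (auto simp: x_def)
qed

lemma ga_normal_commutes_with_star:
  fixes G (structure)
  assumes "group G" and "group_involution G s" and "ga_normal G s TYPE('f::field)"
    and "(2::'f) \<noteq> 0" and "h \<in> carrier G"
  shows "h \<otimes> s h = s h \<otimes> h"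
  using ga_normal_factorisation[OF assms(1-4), of "{h}" h h] assms(5) by auto

lemma ga_normal_fixed_commutes_nonfixed:
  fixes G (structure)
  assumes "group G" and "group_involution G s" and "ga_normal G s TYPE('f::field)"
    and "(2::'f) \<noteq> 0"
    and g: "g \<in> carrier G" "s g = g" and h: "h \<in> carrier G" "s h \<noteq> h"
  shows "h \<otimes> g = g \<otimes> h"
proof -
  interpret group G by fact
  have sh: "s h \<in> carrier G" "s (s h) = h"
    using assms(2) h(1) by (auto dest: group_involutionD)
  have "g \<noteq> h"
    using g h by auto
  have "card {g, h} \<le> 2"
    using card_insert_le_m1[of 2 "{h}" g] by simp
  then have "\<exists>c\<in>{g, h}. \<exists>d\<in>{g, h}. h \<otimes> s g = s c \<otimes> d"
    using ga_normal_factorisation[OF assms(1-4), of "{g, h}" h g] g h by simp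
  then obtain c d where cd: "c \<in> {g, h}" "d \<in> {g, h}" and hg: "h \<otimes> g = s c \<otimes> d"
    unfolding g(2) by blast
  consider "c = g" "d = g" | "c = g" "d = h" | "c = h" "d = g" | "c = h" "d = h"
    using cd by blast
  then show ?thesis
  proof cases
    case 1
    then have "h = g"
      using hg g h by simp
    with \<open>g \<noteq> h\<close> show ?thesis by simp
  next
    case 2
    with hg g show ?thesis by simp
  next
    case 3
    then have "h = s h"
      using hg g h sh by simp
    with h(2) show ?thesis by simp
  next
    case 4
    then have "h \<otimes> g = h \<otimes> s h"
      using hg ga_normal_commutes_with_star[OF assms(1-4) h(1)] by simp
    then have "g = s h"
      using g h sh by simp
    with g(2) sh(2) \<open>g \<noteq> h\<close> show ?thesis by simp
  qed
qed

lemma ga_normal_fixed_in_center: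
  fixes G (structure)
  assumes "group G" and "group_involution G s" and "ga_normal G s TYPE('f::field)"
    and "(2::'f) \<noteq> 0" and g: "g \<in> carrier G" "s g = g"
  shows "g \<in> group_center G"
proof -
  interpret group G by fact
  have "g \<otimes> h = h \<otimes> g" if h: "h \<in> carrier G" for h
  proof (cases "s h = h")
    case False
    then show ?thesis
      using ga_normal_fixed_commutes_nonfixed[OF assms h] by simp
  next
    case True
    show ?thesis
    proof (cases "s (g \<otimes> h) = g \<otimes> h")
      case True
      then show ?thesis
        using group_involutionD(3)[OF assms(2) g(1) h] g(2) \<open>s h = h\<close> by simp
    next
      case False
      then have "(g \<otimes> h) \<otimes> g = g \<otimes> (g \<otimes> h)"
        using ga_normal_fixed_commutes_nonfixed[OF assms(1-4) g] g h by simp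
      then show ?thesis
        using g h by (simp add: m_assoc)
    qed
  qed
  then show ?thesis
    using g unfolding group_center_def by auto
qed

theorem lemma5:
  fixes G (structure) and s :: "'a \<Rightarrow> 'a"
  assumes "group G"
    and "infinite (UNIV :: 'f::field set)"
    and "(2::'f) \<noteq> 0"
    and "group_involution G s"
    and "ga_normal G s TYPE('f)"
  shows "({g \<in> carrier G. s g = g} \<subseteq> group_center G) \<and>
         (\<forall>g \<in> carrier G. g \<otimes> s g = s g \<otimes> g \<and> g \<otimes> s g \<in> group_center G)"
  \<comment> \<open>The argument only uses char F \<noteq> 2.\<close>
proof (intro conjI ballI subsetI)
  fix g
  assume "g \<in> {g \<in> carrier G. s g = g}"
  then show "g \<in> group_center G"
    using ga_normal_fixed_in_center[OF assms(1,4,5,3)] by auto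
next
  fix g
  assume g: "g \<in> carrier G"
  show "g \<otimes> s g = s g \<otimes> g"
    using ga_normal_commutes_with_star[OF assms(1,4,5,3) g] .
  have "g \<otimes> s g \<in> carrier G" and "s (g \<otimes> s g) = g \<otimes> s g"
    using group_involutionD[OF assms(4) g] monoid.m_closed[OF group.is_monoid[OF assms(1)] g]
    by simp_all
  then show "g \<otimes> s g \<in> group_center G"
    using ga_normal_fixed_in_center[OF assms(1,4,5,3)] by blast
qed

end
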